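(* Let $x$ be fixed, let $\pi_{\pm|x}\ge0$ with $\pi_{+|x}+\pi_{-|x}=1$, and let $\rho_{\pm|x}=|\psi_{\pm|x}\rangle\langle\psi_{\pm|x}|=\tfrac12(I+\mathbf s_{\pm|x}\cdot\boldsymbol\sigma)$ be pure qubit states. Define the fidelity-based discriminability of the ensemble $\{(\pi_{+|x},\rho_{+|x}),(\pi_{-|x},\rho_{-|x})\}$ by $$D_x=\eta_1^2+\eta_2^2+2\eta_1\eta_2\sqrt{1-|\gamma|^2}+|\gamma|^2(\eta_1\eta_2-\eta_{\min}^2),$$ where $\eta_1=\pi_{+|x}$, $\eta_2=\pi_{-|x}$, $\eta_{\min}=\min\{\eta_1,\eta_2\}$ and $\gamma=\langle\psi_{+|x}|\psi_{-|x}\rangle$. With the SWAP-test pass probability $p(\mathsf{pass}|\rho,\sigma)=\tfrac12(1+\mathrm{Tr}(\rho\sigma))$, let $p_{\mathrm{pur}}^{\pm|x}=p(\mathsf{pass}|\rho_{\pm|x},\rho_{\pm|x})$, $p_{\mathrm{ov}}^{x}=p(\mathsf{pass}|\rho_{+|x},\rho_{-|x})$, and let $\widetilde R_x\ge0$ be given by $$\widetilde R_x^2=2\Big[\pi_{+|x}^2(2p_{\mathrm{pur}}^{+|x}-1)+\pi_{-|x}^2(2p_{\mathrm{pur}}^{-|x}-1)-2\pi_{+|x}\pi_{-|x}(2p_{\mathrm{ov}}^{x}-1)\Big]-(\pi_{+|x}-\pi_{-|x})^2 .$$ Then $\widetilde R_x\le 2D_x-1$.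
   Context: $\boldsymbol\sigma$ denotes the vector of Pauli matrices. In the paper, $\pi_{a|x}=p(a|x)$ are Alice's outcome probabilities and $\rho_{a|x}$ Bob's conditional preparations in a Bell experiment. *)

theory Defs
  imports "HOL-Analysis.Analysis"
begin

definition braket :: "complex^2 \<Rightarrow> complex^2 \<Rightarrow> complex" where
  "braket \<phi> \<psi> = (\<Sum>i\<in>UNIV. cnj (\<phi>$i) * \<psi>$i)"

definition ket_proj :: "complex^2 \<Rightarrow> complex^2^2" where
  "ket_proj \<psi> = (\<chi> i j. \<psi>$i * cnj (\<psi>$j))"

definition mtrace :: "complex^'n^'n \<Rightarrow> complex" where
  "mtrace A = (\<Sum>i\<in>UNIV. A$i$i)"

text \<open>SWAP-test pass probability (1 + Tr(rho sigma))/2; the trace is real for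
  Hermitian rho, sigma, so we take its real part.\<close>
definition swap_pass :: "complex^2^2 \<Rightarrow> complex^2^2 \<Rightarrow> real" where
  "swap_pass \<rho> \<sigma> = (1 + Re (mtrace (\<rho> ** \<sigma>))) / 2"

definition fid_discr :: "real \<Rightarrow> real \<Rightarrow> complex^2 \<Rightarrow> complex^2 \<Rightarrow> real" where
  "fid_discr \<eta>1 \<eta>2 \<psi>1 \<psi>2 =
     (let g = cmod (braket \<psi>1 \<psi>2); \<eta>m = min \<eta>1 \<eta>2 in
      \<eta>1^2 + \<eta>2^2 + 2 * \<eta>1 * \<eta>2 * sqrt (1 - g^2) + g^2 * (\<eta>1 * \<eta>2 - \<eta>m^2))"

end

theory Submission
  imports Defs
begin

text \<open>Both sides depend only on the bias \<open>s = |\<pi>\<^sub>+ - \<pi>\<^sub>-|\<close> and the overlap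
  \<open>g = |\<langle>\<psi>\<^sub>+|\<psi>\<^sub>-\<rangle>|\<close>. For pure states \<open>Tr(\<rho>\<sigma>)\<close> is the squared overlap, so the SWAP-test
  data give \<open>R\<^sup>2 = 1 - (1 - s\<^sup>2) g\<^sup>2\<close>. Writing \<open>z = sqrt (1 - g\<^sup>2)\<close>, this is
  \<open>R\<^sup>2 = z\<^sup>2 + s\<^sup>2 (1 - z\<^sup>2)\<close>, while \<open>2 D - 1 = z + s (1 - z) (1 + z - s z)\<close>. The difference of
  the squares of these two quantities factors as
  \<open>s z (1 - s) (1 - z) (4 - (1 - s) (1 - z) (2 - s z))\<close>, which is nonnegative on \<open>[0,1]\<^sup>2\<close>.\<close>

lemma braket_swap: "braket q p = cnj (braket p q)"
  unfolding braket_def by (simp add: sum_2)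

lemma norm_braket_self: "cmod (braket p p) = (norm p)\<^sup>2"
  unfolding braket_def norm_vec_def L2_set_def sum_2
  by (simp add: mult.commute[of "cnj _"] flip: complex_norm_square of_real_power of_real_add)

lemma norm_braket_le: "cmod (braket p q) \<le> norm p * norm q"
proof -
  have "cmod (braket p q) \<le> (\<Sum>i\<in>UNIV. cmod (p$i) * cmod (q$i))"
    unfolding braket_def by (rule order_trans[OF norm_sum]) (simp add: norm_mult)
  also have "\<dots> \<le> norm p * norm q"
    using L2_set_mult_ineq[of "\<lambda>i. cmod (p$i)" "\<lambda>i. cmod (q$i)" UNIV]
    by (simp add: norm_vec_def)
  finally show ?thesis .
qed

lemma mtrace_ket_proj_mult: "mtrace (ket_proj p ** ket_proj q) = braket q p * braket p q"
  unfolding mtrace_def matrix_matrix_mult_def ket_proj_def braket_def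
  by (simp add: sum_2 algebra_simps)

lemma swap_pass_ket_proj: "2 * swap_pass (ket_proj p) (ket_proj q) - 1 = (cmod (braket p q))\<^sup>2"
proof -
  have "Re (mtrace (ket_proj p ** ket_proj q)) = (cmod (braket p q))\<^sup>2"
    unfolding mtrace_ket_proj_mult braket_swap[of q p] mult.commute[of "cnj _"]
    by (simp flip: complex_norm_square)
  then show ?thesis
    unfolding swap_pass_def by (simp add: field_simps)
qed

lemma sqrt_mix_le:
  fixes s z :: real
  assumes "0 \<le> s" "s \<le> 1" "0 \<le> z" "z \<le> 1"
  shows "sqrt (z\<^sup>2 + s\<^sup>2 * (1 - z\<^sup>2)) \<le> z + s * (1 - z) * (1 + z - s * z)"
proof (rule real_le_lsqrt)
  have sz: "s * z \<le> 1"
    using assms by (simp add: mult_le_one)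
  then show "0 \<le> z + s * (1 - z) * (1 + z - s * z)"
    using assms by simp
  have "(1 - s) * (1 - z) * (2 - s * z) \<le> 1 * 1 * 2"
    using assms sz by (intro mult_mono) auto
  then have "0 \<le> s * z * (1 - s) * (1 - z) * (4 - (1 - s) * (1 - z) * (2 - s * z))"
    using assms by simp
  also have "\<dots> = (z + s * (1 - z) * (1 + z - s * z))\<^sup>2 - (z\<^sup>2 + s\<^sup>2 * (1 - z\<^sup>2))"
    by (simp add: algebra_simps power2_eq_square)
  finally show "z\<^sup>2 + s\<^sup>2 * (1 - z\<^sup>2) \<le> (z + s * (1 - z) * (1 + z - s * z))\<^sup>2"
    by simp
qed

lemma prob_pair_bias_eqs:
  fixes p q :: real
  assumes "p + q = 1"
  shows "4 * p * q = 1 - (p - q)\<^sup>2" and "p\<^sup>2 + q\<^sup>2 = (1 + (p - q)\<^sup>2) / 2"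
    and "min p q = (1 - \<bar>p - q\<bar>) / 2"
proof -
  have q: "q = 1 - p"
    using assms by simp
  show "4 * p * q = 1 - (p - q)\<^sup>2" "p\<^sup>2 + q\<^sup>2 = (1 + (p - q)\<^sup>2) / 2"
    unfolding q by (simp_all add: power2_eq_square algebra_simps)
  show "min p q = (1 - \<bar>p - q\<bar>) / 2"
    unfolding q by (simp add: min_def)
qed

theorem lemma2:
  fixes \<pi>p \<pi>m R :: real and \<psi>p \<psi>m :: "complex^2"
  assumes "\<pi>p \<ge> 0" and "\<pi>m \<ge> 0" and "\<pi>p + \<pi>m = 1"
    and "norm \<psi>p = 1" and "norm \<psi>m = 1"
    and "R \<ge> 0"
    and "R^2 = 2 * (\<pi>p^2 * (2 * swap_pass (ket_proj \<psi>p) (ket_proj \<psi>p) - 1)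
                 + \<pi>m^2 * (2 * swap_pass (ket_proj \<psi>m) (ket_proj \<psi>m) - 1)
                 - 2 * \<pi>p * \<pi>m * (2 * swap_pass (ket_proj \<psi>p) (ket_proj \<psi>m) - 1))
               - (\<pi>p - \<pi>m)^2"
  shows "R \<le> 2 * fid_discr \<pi>p \<pi>m \<psi>p \<psi>m - 1"
proof -
  define s where "s = \<bar>\<pi>p - \<pi>m\<bar>"
  define g where "g = cmod (braket \<psi>p \<psi>m)"
  define z where "z = sqrt (1 - g\<^sup>2)"
  have s: "0 \<le> s" "s \<le> 1"
    using assms(1-3) by (auto simp: s_def)
  have "g \<le> 1"
    using norm_braket_le[of \<psi>p \<psi>m] assms(4,5) by (simp add: g_def)
  then have g2: "g\<^sup>2 = 1 - z\<^sup>2" and z: "0 \<le> z" "z \<le> 1"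
    by (auto simp: z_def g_def abs_square_le_1)
  have s2: "(\<pi>p - \<pi>m)\<^sup>2 = s\<^sup>2"
    by (simp add: s_def)
  note prod = prob_pair_bias_eqs(1)[OF assms(3), unfolded s2]
  note sq = prob_pair_bias_eqs(2)[OF assms(3), unfolded s2]
  note min = prob_pair_bias_eqs(3)[OF assms(3), folded s_def]
  have "R\<^sup>2 = 2 * (\<pi>p\<^sup>2 + \<pi>m\<^sup>2) - (4 * \<pi>p * \<pi>m) * g\<^sup>2 - (\<pi>p - \<pi>m)\<^sup>2"
    using assms(7) by (simp add: swap_pass_ket_proj norm_braket_self assms(4,5) flip: g_def)
  then have "R\<^sup>2 = z\<^sup>2 + s\<^sup>2 * (1 - z\<^sup>2)"
    unfolding prod sq g2 by (simp add: s_def field_simps)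
  then have "R = sqrt (z\<^sup>2 + s\<^sup>2 * (1 - z\<^sup>2))"
    using assms(6) real_sqrt_unique by metis
  moreover have "2 * fid_discr \<pi>p \<pi>m \<psi>p \<psi>m - 1 = z + s * (1 - z) * (1 + z - s * z)"
  proof -
    have "fid_discr \<pi>p \<pi>m \<psi>p \<psi>m
        = (\<pi>p\<^sup>2 + \<pi>m\<^sup>2) + (4 * \<pi>p * \<pi>m) * z / 2 + g\<^sup>2 * ((4 * \<pi>p * \<pi>m) / 4 - (min \<pi>p \<pi>m)\<^sup>2)"
      by (simp add: fid_discr_def Let_def flip: g_def z_def)
    then show ?thesis
      unfolding prod sq min g2 by (simp add: field_simps power2_eq_square)
  qed
  ultimately show ?thesis
    using sqrt_mix_le[OF s z] by simp
qed

end
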